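(* Let $\mathfrak A$ be a properly infinite von Neumann algebra acting on a Hilbert space $\mathcal H$. Then $\mathfrak A$ is neither $*$-clean nor strongly clean.
   Context: A $*$-ring is $*$-clean if every element is the sum of an invertible element and a projection ($P=P^*=P^2$). A unital ring is strongly clean if every element $T$ can be written as $U+P$ with $U$ invertible, $P$ idempotent and $PT=TP$. *)

theory Defs
  imports "HOL-Analysis.Analysis"
begin

text \<open>Concrete model of a complex Hilbert space: \<open>\<ell>\<^sup>2('i)\<close>, the square-summable
  complex functions on an arbitrary index type \<open>'i\<close> (every nonzero Hilbert space is
  unitarily isomorphic to one of these, via an orthonormal basis).\<close>

definition l2 :: "('i \<Rightarrow> complex) set" where
  "l2 = {x. (\<lambda>i. (cmod (x i))^2) summable_on UNIV}"

definition l2_inner :: "('i \<Rightarrow> complex) \<Rightarrow> ('i \<Rightarrow> complex) \<Rightarrow> complex" where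
  "l2_inner x y = (\<Sum>\<^sub>\<infinity>i. cnj (x i) * y i)"

definition l2_norm :: "('i \<Rightarrow> complex) \<Rightarrow> real" where
  "l2_norm x = sqrt (\<Sum>\<^sub>\<infinity>i. (cmod (x i))^2)"

text \<open>Bounded linear operators on \<open>\<ell>\<^sup>2\<close>; represented as functions that are
  normalised to be 0 outside \<open>\<ell>\<^sup>2\<close>, so that equality of operators is equality of functions.\<close>

definition bops :: "(('i \<Rightarrow> complex) \<Rightarrow> ('i \<Rightarrow> complex)) set" where
  "bops = {T. (\<forall>x\<in>l2. T x \<in> l2)
            \<and> (\<forall>x\<in>l2. \<forall>y\<in>l2. \<forall>c. T (\<lambda>i. x i + c * y i) = (\<lambda>i. T x i + c * T y i))
            \<and> (\<exists>K. \<forall>x\<in>l2. l2_norm (T x) \<le> K * l2_norm x)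
            \<and> (\<forall>x. x \<notin> l2 \<longrightarrow> T x = (\<lambda>i. 0))}"

definition bid :: "('i \<Rightarrow> complex) \<Rightarrow> ('i \<Rightarrow> complex)" where
  "bid = (\<lambda>x. if x \<in> l2 then x else (\<lambda>i. 0))"

definition bzero :: "('i \<Rightarrow> complex) \<Rightarrow> ('i \<Rightarrow> complex)" where
  "bzero = (\<lambda>x i. 0)"

definition badd :: "(('i \<Rightarrow> complex) \<Rightarrow> ('i \<Rightarrow> complex)) \<Rightarrow> (('i \<Rightarrow> complex) \<Rightarrow> ('i \<Rightarrow> complex))
                    \<Rightarrow> ('i \<Rightarrow> complex) \<Rightarrow> ('i \<Rightarrow> complex)" where
  "badd S T = (\<lambda>x i. S x i + T x i)"

definition bscale :: "complex \<Rightarrow> (('i \<Rightarrow> complex) \<Rightarrow> ('i \<Rightarrow> complex)) \<Rightarrow> ('i \<Rightarrow> complex) \<Rightarrow> ('i \<Rightarrow> complex)" where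
  "bscale c T = (\<lambda>x i. c * T x i)"

definition is_adjoint :: "(('i \<Rightarrow> complex) \<Rightarrow> ('i \<Rightarrow> complex)) \<Rightarrow> (('i \<Rightarrow> complex) \<Rightarrow> ('i \<Rightarrow> complex)) \<Rightarrow> bool" where
  "is_adjoint T S \<longleftrightarrow> S \<in> bops \<and> (\<forall>x\<in>l2. \<forall>y\<in>l2. l2_inner (T x) y = l2_inner x (S y))"

definition adj :: "(('i \<Rightarrow> complex) \<Rightarrow> ('i \<Rightarrow> complex)) \<Rightarrow> ('i \<Rightarrow> complex) \<Rightarrow> ('i \<Rightarrow> complex)" where
  "adj T = (SOME S. is_adjoint T S)"

definition commutant :: "(('i \<Rightarrow> complex) \<Rightarrow> ('i \<Rightarrow> complex)) set \<Rightarrow> (('i \<Rightarrow> complex) \<Rightarrow> ('i \<Rightarrow> complex)) set" where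
  "commutant S = {T \<in> bops. \<forall>A\<in>S. T \<circ> A = A \<circ> T}"

definition von_neumann_algebra :: "(('i \<Rightarrow> complex) \<Rightarrow> ('i \<Rightarrow> complex)) set \<Rightarrow> bool" where
  "von_neumann_algebra M \<longleftrightarrow>
     M \<subseteq> bops \<and> bid \<in> M
     \<and> (\<forall>S\<in>M. \<forall>T\<in>M. badd S T \<in> M \<and> S \<circ> T \<in> M)
     \<and> (\<forall>c. \<forall>T\<in>M. bscale c T \<in> M)
     \<and> (\<forall>T\<in>M. adj T \<in> M)
     \<and> commutant (commutant M) = M"

definition is_proj :: "(('i \<Rightarrow> complex) \<Rightarrow> ('i \<Rightarrow> complex)) set \<Rightarrow> (('i \<Rightarrow> complex) \<Rightarrow> ('i \<Rightarrow> complex)) \<Rightarrow> bool" where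
  "is_proj M P \<longleftrightarrow> P \<in> M \<and> P \<circ> P = P \<and> adj P = P"

definition mvn_equiv :: "(('i \<Rightarrow> complex) \<Rightarrow> ('i \<Rightarrow> complex)) set \<Rightarrow> (('i \<Rightarrow> complex) \<Rightarrow> ('i \<Rightarrow> complex))
                         \<Rightarrow> (('i \<Rightarrow> complex) \<Rightarrow> ('i \<Rightarrow> complex)) \<Rightarrow> bool" where
  "mvn_equiv M P Q \<longleftrightarrow> (\<exists>V\<in>M. adj V \<circ> V = P \<and> V \<circ> adj V = Q)"

text \<open>\<open>P\<close> is infinite in \<open>M\<close>: equivalent to a proper subprojection (\<open>Q \<le> P\<close> iff \<open>Q P = Q\<close>).\<close>

definition infinite_proj :: "(('i \<Rightarrow> complex) \<Rightarrow> ('i \<Rightarrow> complex)) set \<Rightarrow> (('i \<Rightarrow> complex) \<Rightarrow> ('i \<Rightarrow> complex)) \<Rightarrow> bool" where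
  "infinite_proj M P \<longleftrightarrow> (\<exists>Q. is_proj M Q \<and> Q \<circ> P = Q \<and> Q \<noteq> P \<and> mvn_equiv M P Q)"

definition central_proj :: "(('i \<Rightarrow> complex) \<Rightarrow> ('i \<Rightarrow> complex)) set \<Rightarrow> (('i \<Rightarrow> complex) \<Rightarrow> ('i \<Rightarrow> complex)) \<Rightarrow> bool" where
  "central_proj M Z \<longleftrightarrow> is_proj M Z \<and> (\<forall>A\<in>M. Z \<circ> A = A \<circ> Z)"

text \<open>Properly infinite (Kadison--Ringrose 6.3.1): the identity is infinite and
  for every central projection \<open>Z\<close>, \<open>Z\<close> (= \<open>Z\<cdot>1\<close>) is either 0 or infinite.\<close>

definition properly_infinite :: "(('i \<Rightarrow> complex) \<Rightarrow> ('i \<Rightarrow> complex)) set \<Rightarrow> bool" where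
  "properly_infinite M \<longleftrightarrow> infinite_proj M bid
     \<and> (\<forall>Z. central_proj M Z \<longrightarrow> Z = bzero \<or> infinite_proj M Z)"

definition invertible_in :: "(('i \<Rightarrow> complex) \<Rightarrow> ('i \<Rightarrow> complex)) set \<Rightarrow> (('i \<Rightarrow> complex) \<Rightarrow> ('i \<Rightarrow> complex)) \<Rightarrow> bool" where
  "invertible_in M U \<longleftrightarrow> U \<in> M \<and> (\<exists>V\<in>M. U \<circ> V = bid \<and> V \<circ> U = bid)"

definition star_clean :: "(('i \<Rightarrow> complex) \<Rightarrow> ('i \<Rightarrow> complex)) set \<Rightarrow> bool" where
  "star_clean M \<longleftrightarrow> (\<forall>T\<in>M. \<exists>U P. invertible_in M U \<and> is_proj M P \<and> T = badd U P)"

definition strongly_clean :: "(('i \<Rightarrow> complex) \<Rightarrow> ('i \<Rightarrow> complex)) set \<Rightarrow> bool" where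
  "strongly_clean M \<longleftrightarrow> (\<forall>T\<in>M. \<exists>U P. invertible_in M U \<and> P \<in> M \<and> P \<circ> P = P
                                        \<and> P \<circ> T = T \<circ> P \<and> T = badd U P)"

end

theory Submission
  imports Defs
begin

text \<open>It yields an isometry \<open>V \<in> M\<close> with
  \<open>V V\<^sup>* \<noteq> 1\<close>, hence a wandering vector \<open>\<xi> \<noteq> 0\<close> with \<open>V\<^sup>* \<xi> = 0\<close>, whose orbit
  \<open>V\<^sup>m \<xi>\<close> is orthogonal.

  If \<open>2 V = U + P\<close> with \<open>U\<close> invertible and \<open>P\<close> a projection, then \<open>x = U\<^sup>-\<^sup>1 \<xi>\<close> satisfies
  \<open>2 x = V\<^sup>* P x\<close>, impossible for the contraction \<open>V\<^sup>* P\<close> unless \<open>\<xi> = 0\<close>.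

  If \<open>V = U + e\<close> with \<open>U\<close> invertible and \<open>e\<close> an idempotent commuting with \<open>V\<close>, then \<open>V\<close> is
  invertible on the range of \<open>1 - e\<close>, which is therefore orthogonal to the orbit of \<open>\<xi>\<close>, and
  \<open>e = U\<^sup>-\<^sup>1 e (V - 1)\<close> is bounded by \<open>C \<parallel>(V - 1) \<cdot>\<parallel>\<close>. The orbit sums
  \<open>X\<^sub>N = \<xi> + V \<xi> + \<dots> + V\<^sup>N\<^sup>-\<^sup>1 \<xi>\<close> then satisfy \<open>\<parallel>X\<^sub>N\<parallel>\<^sup>2 = \<langle>X\<^sub>N, e X\<^sub>N\<rangle> \<le> 2 C \<parallel>X\<^sub>N\<parallel> \<parallel>\<xi>\<parallel>\<close>,
  contradicting \<open>\<parallel>X\<^sub>N\<parallel>\<^sup>2 = N \<parallel>\<xi>\<parallel>\<^sup>2\<close>.\<close>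

section \<open>The Hilbert space \<open>\<ell>\<^sup>2\<close>\<close>

lemma l2_zero [simp]: "(\<lambda>i. 0) \<in> l2"
  by (simp add: l2_def)

lemma l2_norm_power2_summable: "x \<in> l2 \<Longrightarrow> (\<lambda>i. (cmod (x i))\<^sup>2) summable_on UNIV"
  by (simp add: l2_def)

lemma l2_lincomb:
  assumes "x \<in> l2" "y \<in> l2"
  shows "(\<lambda>i. x i + c * y i) \<in> l2"
proof -
  have bound: "(cmod (x i + c * y i))\<^sup>2 \<le> 2 * (cmod (x i))\<^sup>2 + 2 * (cmod c)\<^sup>2 * (cmod (y i))\<^sup>2" for i
  proof -
    have "cmod (x i + c * y i) \<le> cmod (x i) + cmod c * cmod (y i)"
      by (metis norm_mult norm_triangle_ineq)
    hence "(cmod (x i + c * y i))\<^sup>2 \<le> (cmod (x i) + cmod c * cmod (y i))\<^sup>2"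
      by (simp add: power_mono)
    also have "\<dots> \<le> 2 * (cmod (x i))\<^sup>2 + 2 * (cmod c)\<^sup>2 * (cmod (y i))\<^sup>2"
      using zero_le_power2[of "cmod (x i) - cmod c * cmod (y i)"]
      by (simp add: power2_eq_square algebra_simps)
    finally show ?thesis .
  qed
  have "(\<lambda>i. 2 * (cmod (x i))\<^sup>2 + 2 * (cmod c)\<^sup>2 * (cmod (y i))\<^sup>2) summable_on UNIV"
    using assms by (intro summable_on_add summable_on_cmult_right) (auto simp: l2_def)
  with bound show ?thesis
    by (auto simp: l2_def intro: summable_on_comparison_test)
qed

lemma l2_add: "x \<in> l2 \<Longrightarrow> y \<in> l2 \<Longrightarrow> (\<lambda>i. x i + y i) \<in> l2"
  using l2_lincomb[of x y 1] by simp

lemma l2_diff: "x \<in> l2 \<Longrightarrow> y \<in> l2 \<Longrightarrow> (\<lambda>i. x i - y i) \<in> l2"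
  using l2_lincomb[of x y "-1"] by simp

lemma l2_scale: "x \<in> l2 \<Longrightarrow> (\<lambda>i. c * x i) \<in> l2"
  using l2_lincomb[of "\<lambda>i. 0" x c] by simp

lemma l2_sum:
  assumes "finite F" "\<And>j. j \<in> F \<Longrightarrow> g j \<in> l2"
  shows "(\<lambda>i. \<Sum>j\<in>F. g j i) \<in> l2"
  using assms by (induction F rule: finite_induct) (auto intro: l2_add)

lemma l2_inner_abs_summable:
  assumes "x \<in> l2" "y \<in> l2"
  shows "(\<lambda>i. norm (cnj (x i) * y i)) summable_on UNIV"
proof (rule summable_on_comparison_test)
  show "(\<lambda>i. (cmod (x i))\<^sup>2 + (cmod (y i))\<^sup>2) summable_on UNIV"
    using assms unfolding l2_def by (intro summable_on_add) auto
  show "norm (cnj (x i) * y i) \<le> (cmod (x i))\<^sup>2 + (cmod (y i))\<^sup>2" for i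
  proof -
    have "0 \<le> cmod (x i) * cmod (y i)" by simp
    moreover have "2 * (cmod (x i) * cmod (y i)) \<le> (cmod (x i))\<^sup>2 + (cmod (y i))\<^sup>2"
      using zero_le_power2[of "cmod (x i) - cmod (y i)"] by (simp add: power2_diff)
    moreover have "norm (cnj (x i) * y i) = cmod (x i) * cmod (y i)"
      by (simp add: norm_mult)
    ultimately show ?thesis by linarith
  qed
qed simp

lemma l2_inner_summable:
  "x \<in> l2 \<Longrightarrow> y \<in> l2 \<Longrightarrow> (\<lambda>i. cnj (x i) * y i) summable_on UNIV"
  by (rule abs_summable_summable) (rule l2_inner_abs_summable)

lemma l2_inner_commute: "l2_inner y x = cnj (l2_inner x y)"
  unfolding l2_inner_def infsum_cnj[symmetric] by (simp add: mult.commute)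

lemma l2_inner_zero_left [simp]: "l2_inner (\<lambda>i. 0) x = 0"
  and l2_inner_zero_right [simp]: "l2_inner x (\<lambda>i. 0) = 0"
  by (simp_all add: l2_inner_def)

lemma l2_inner_lincomb_right:
  assumes "x \<in> l2" "y \<in> l2" "z \<in> l2"
  shows "l2_inner x (\<lambda>i. y i + c * z i) = l2_inner x y + c * l2_inner x z"
proof -
  have "l2_inner x (\<lambda>i. y i + c * z i) = (\<Sum>\<^sub>\<infinity>i. cnj (x i) * y i + c * (cnj (x i) * z i))"
    unfolding l2_inner_def by (simp add: algebra_simps)
  also have "\<dots> = (\<Sum>\<^sub>\<infinity>i. cnj (x i) * y i) + c * (\<Sum>\<^sub>\<infinity>i. cnj (x i) * z i)"
    using assms
    by (simp add: infsum_add infsum_cmult_right summable_on_cmult_right l2_inner_summable)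
  finally show ?thesis by (simp add: l2_inner_def)
qed

lemma l2_inner_lincomb_left:
  assumes "x \<in> l2" "y \<in> l2" "z \<in> l2"
  shows "l2_inner (\<lambda>i. y i + c * z i) x = l2_inner y x + cnj c * l2_inner z x"
  using l2_inner_lincomb_right[OF assms, of c]
  by (simp add: l2_inner_commute[of _ x])

lemma l2_inner_diff_left:
  "x \<in> l2 \<Longrightarrow> y \<in> l2 \<Longrightarrow> z \<in> l2 \<Longrightarrow> l2_inner (\<lambda>i. y i - z i) x = l2_inner y x - l2_inner z x"
  using l2_inner_lincomb_left[of x y z "-1"] by simp

lemma l2_inner_diff_right:
  "x \<in> l2 \<Longrightarrow> y \<in> l2 \<Longrightarrow> z \<in> l2 \<Longrightarrow> l2_inner x (\<lambda>i. y i - z i) = l2_inner x y - l2_inner x z"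
  using l2_inner_lincomb_right[of x y z "-1"] by simp

lemma l2_inner_scale_left:
  "x \<in> l2 \<Longrightarrow> y \<in> l2 \<Longrightarrow> l2_inner (\<lambda>i. c * y i) x = cnj c * l2_inner y x"
  using l2_inner_lincomb_left[of x "\<lambda>i. 0" y c] by simp

lemma l2_inner_sum_left:
  assumes "finite F" "\<And>j. j \<in> F \<Longrightarrow> g j \<in> l2" "y \<in> l2"
  shows "l2_inner (\<lambda>i. \<Sum>j\<in>F. g j i) y = (\<Sum>j\<in>F. l2_inner (g j) y)"
  using assms(1,2)
proof (induction F rule: finite_induct)
  case (insert a F)
  have "(\<lambda>i. \<Sum>j\<in>insert a F. g j i) = (\<lambda>i. (\<Sum>j\<in>F. g j i) + 1 * g a i)"
    using insert.hyps by (simp add: add.commute)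
  then show ?case
    using insert l2_inner_lincomb_left[OF assms(3) l2_sum[of F g], of "g a" 1] by simp
qed simp

lemma l2_inner_sum_right:
  assumes "finite F" "\<And>j. j \<in> F \<Longrightarrow> g j \<in> l2" "y \<in> l2"
  shows "l2_inner y (\<lambda>i. \<Sum>j\<in>F. g j i) = (\<Sum>j\<in>F. l2_inner y (g j))"
  using l2_inner_sum_left[OF assms] by (simp add: l2_inner_commute[of y])

lemma l2_norm_nonneg: "0 \<le> l2_norm x"
  by (simp add: l2_norm_def infsum_nonneg)

lemma l2_norm_power2: "(l2_norm x)\<^sup>2 = (\<Sum>\<^sub>\<infinity>i. (cmod (x i))\<^sup>2)"
  by (simp add: l2_norm_def infsum_nonneg)

lemma l2_inner_self:
  assumes "x \<in> l2"
  shows "l2_inner x x = of_real ((l2_norm x)\<^sup>2)"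
proof -
  have "l2_inner x x = (\<Sum>\<^sub>\<infinity>i. of_real ((cmod (x i))\<^sup>2))"
    unfolding l2_inner_def by (metis complex_norm_square mult.commute)
  also have "\<dots> = of_real (\<Sum>\<^sub>\<infinity>i. (cmod (x i))\<^sup>2)"
    by (intro infsumI has_sum_of_real has_sum_infsum l2_norm_power2_summable assms)
  finally show ?thesis by (simp add: l2_norm_power2)
qed

lemma l2_norm_power2_eq_inner:
  "x \<in> l2 \<Longrightarrow> (l2_norm x)\<^sup>2 = cmod (l2_inner x x)"
  by (simp add: l2_inner_self norm_power)

lemma l2_norm_eq_0D:
  assumes "x \<in> l2" "l2_norm x = 0"
  shows "x = (\<lambda>i. 0)"
proof
  fix i
  have "(\<Sum>\<^sub>\<infinity>i. (cmod (x i))\<^sup>2) \<le> 0" using assms(2) l2_norm_power2[of x] by simp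
  hence "(cmod (x i))\<^sup>2 = 0"
    by (rule nonneg_infsum_le_0D) (use assms in \<open>auto simp: l2_def\<close>)
  thus "x i = 0" by simp
qed

lemma l2_norm_power2_lincomb:
  assumes "x \<in> l2" "y \<in> l2"
  shows "(l2_norm (\<lambda>i. x i + c * y i))\<^sup>2
           = (l2_norm x)\<^sup>2 + 2 * Re (c * l2_inner x y) + (cmod c)\<^sup>2 * (l2_norm y)\<^sup>2"
proof -
  have "of_real ((l2_norm (\<lambda>i. x i + c * y i))\<^sup>2)
          = l2_inner (\<lambda>i. x i + c * y i) (\<lambda>i. x i + c * y i)"
    by (rule l2_inner_self[OF l2_lincomb, symmetric]) (use assms in auto)
  also have "\<dots> = l2_inner x x + c * l2_inner x y + cnj c * (l2_inner y x + c * l2_inner y y)"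
    using l2_inner_lincomb_left[OF l2_lincomb[OF assms] assms]
      l2_inner_lincomb_right[OF assms(1) assms] l2_inner_lincomb_right[OF assms(2) assms]
    by simp
  also have "\<dots> = of_real ((l2_norm x)\<^sup>2) + (c * l2_inner x y + cnj (c * l2_inner x y))
                   + of_real ((cmod c)\<^sup>2 * (l2_norm y)\<^sup>2)"
  proof -
    have "cnj c * c = of_real ((cmod c)\<^sup>2)"
      using complex_norm_square[of c] by (simp only: mult.commute)
    then show ?thesis
      using assms by (simp add: l2_inner_self l2_inner_commute[of y x] algebra_simps)
  qed
  also have "\<dots> = of_real ((l2_norm x)\<^sup>2 + 2 * Re (c * l2_inner x y) + (cmod c)\<^sup>2 * (l2_norm y)\<^sup>2)"
    unfolding complex_add_cnj of_real_add by (rule refl)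
  finally show ?thesis by (rule of_real_eq_iff[THEN iffD1])
qed

text \<open>Expand \<open>\<parallel>x + c y\<parallel>\<^sup>2 \<ge> 0\<close> at \<open>c = - cnj \<langle>x, y\<rangle> / \<parallel>y\<parallel>\<^sup>2\<close>.\<close>

lemma l2_cauchy_schwarz:
  assumes "x \<in> l2" "y \<in> l2"
  shows "cmod (l2_inner x y) \<le> l2_norm x * l2_norm y"
proof (cases "l2_norm y = 0")
  case True
  then show ?thesis using l2_norm_eq_0D[OF assms(2)] by simp
next
  case False
  define a where "a = (cmod (l2_inner x y))\<^sup>2"
  define n where "n = (l2_norm y)\<^sup>2"
  have n: "n > 0" using False l2_norm_nonneg[of y] by (simp add: n_def)
  define c where "c = - cnj (l2_inner x y) / of_real n"
  have "cnj (l2_inner x y) * l2_inner x y = of_real a"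
    unfolding a_def using complex_norm_square[of "l2_inner x y"] by (simp only: mult.commute)
  hence "Re (c * l2_inner x y) = - a / n"
    unfolding c_def by (simp add: Re_divide_of_real)
  moreover have "(cmod c)\<^sup>2 * n = a / n"
    unfolding c_def a_def using n by (simp add: norm_divide power_divide power2_eq_square)
  ultimately have "(l2_norm (\<lambda>i. x i + c * y i))\<^sup>2 = (l2_norm x)\<^sup>2 - a / n"
    using l2_norm_power2_lincomb[OF assms, of c] unfolding n_def by simp
  hence "a / n \<le> (l2_norm x)\<^sup>2"
    using zero_le_power2[of "l2_norm (\<lambda>i. x i + c * y i)"] by linarith
  hence "a \<le> (l2_norm x)\<^sup>2 * n"
    using n by (simp add: divide_le_eq)
  hence "(cmod (l2_inner x y))\<^sup>2 \<le> (l2_norm x * l2_norm y)\<^sup>2"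
    unfolding a_def n_def by (simp only: power_mult_distrib)
  thus ?thesis
    by (rule power2_le_imp_le) (simp add: l2_norm_nonneg)
qed

lemma l2_norm_triangle:
  assumes "x \<in> l2" "y \<in> l2"
  shows "l2_norm (\<lambda>i. x i + c * y i) \<le> l2_norm x + cmod c * l2_norm y"
proof -
  have "Re (c * l2_inner x y) \<le> cmod c * cmod (l2_inner x y)"
    using complex_Re_le_cmod[of "c * l2_inner x y"] by (simp add: norm_mult)
  also have "\<dots> \<le> cmod c * (l2_norm x * l2_norm y)"
    by (rule mult_left_mono[OF l2_cauchy_schwarz[OF assms] norm_ge_zero])
  finally have "Re (c * l2_inner x y) \<le> cmod c * (l2_norm x * l2_norm y)" .
  moreover have "(l2_norm x + cmod c * l2_norm y)\<^sup>2
      = (l2_norm x)\<^sup>2 + 2 * (cmod c * (l2_norm x * l2_norm y)) + (cmod c)\<^sup>2 * (l2_norm y)\<^sup>2"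
    by (simp add: power2_sum power_mult_distrib algebra_simps)
  ultimately have "(l2_norm (\<lambda>i. x i + c * y i))\<^sup>2 \<le> (l2_norm x + cmod c * l2_norm y)\<^sup>2"
    unfolding l2_norm_power2_lincomb[OF assms] by linarith
  thus ?thesis
    by (rule power2_le_imp_le) (simp add: l2_norm_nonneg)
qed

lemma l2_norm_scale:
  assumes "x \<in> l2"
  shows "l2_norm (\<lambda>i. c * x i) = cmod c * l2_norm x"
proof -
  have "(\<Sum>\<^sub>\<infinity>i. (cmod (c * x i))\<^sup>2) = (cmod c)\<^sup>2 * (\<Sum>\<^sub>\<infinity>i. (cmod (x i))\<^sup>2)"
    using infsum_cmult_right[OF l2_norm_power2_summable[OF assms], of "(cmod c)\<^sup>2"]
    by (simp add: norm_mult power_mult_distrib)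
  thus ?thesis unfolding l2_norm_def by (simp add: real_sqrt_mult)
qed

lemma bops_l2: "T \<in> bops \<Longrightarrow> x \<in> l2 \<Longrightarrow> T x \<in> l2"
  by (simp add: bops_def)

lemma bops_lincomb:
  "T \<in> bops \<Longrightarrow> x \<in> l2 \<Longrightarrow> y \<in> l2 \<Longrightarrow> T (\<lambda>i. x i + c * y i) = (\<lambda>i. T x i + c * T y i)"
  by (simp add: bops_def)

lemma bops_outside_l2: "T \<in> bops \<Longrightarrow> x \<notin> l2 \<Longrightarrow> T x = (\<lambda>i. 0)"
  by (simp add: bops_def)

lemma bops_bounded:
  assumes "T \<in> bops"
  obtains K where "K \<ge> 0" "\<And>x. x \<in> l2 \<Longrightarrow> l2_norm (T x) \<le> K * l2_norm x"
proof -
  obtain K where K: "\<And>x. x \<in> l2 \<Longrightarrow> l2_norm (T x) \<le> K * l2_norm x"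
    using assms unfolding bops_def by blast
  have "l2_norm (T x) \<le> max K 0 * l2_norm x" if "x \<in> l2" for x
  proof -
    have "K * l2_norm x \<le> max K 0 * l2_norm x"
      by (rule mult_right_mono) (simp_all add: l2_norm_nonneg)
    then show ?thesis using K[OF that] by linarith
  qed
  then show ?thesis using that[of "max K 0"] by simp
qed

lemma bops_zero:
  assumes "T \<in> bops"
  shows "T (\<lambda>i. 0) = (\<lambda>i. 0)"
proof -
  have "T (\<lambda>i. 0) = (\<lambda>i. T (\<lambda>i. 0) i + 1 * T (\<lambda>i. 0) i)"
    using bops_lincomb[OF assms l2_zero l2_zero, of 1] by simp
  then show ?thesis by (simp add: fun_eq_iff)
qed

lemma bops_add: "T \<in> bops \<Longrightarrow> x \<in> l2 \<Longrightarrow> y \<in> l2 \<Longrightarrow> T (\<lambda>i. x i + y i) = (\<lambda>i. T x i + T y i)"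
  using bops_lincomb[of T x y 1] by simp

lemma bops_diff: "T \<in> bops \<Longrightarrow> x \<in> l2 \<Longrightarrow> y \<in> l2 \<Longrightarrow> T (\<lambda>i. x i - y i) = (\<lambda>i. T x i - T y i)"
  using bops_lincomb[of T x y "-1"] by simp

lemma bops_scale: "T \<in> bops \<Longrightarrow> x \<in> l2 \<Longrightarrow> T (\<lambda>i. c * x i) = (\<lambda>i. c * T x i)"
  using bops_lincomb[of T "\<lambda>i. 0" x c] bops_zero[of T] by simp

lemma bops_sum:
  assumes "T \<in> bops" "finite F" "\<And>j. j \<in> F \<Longrightarrow> g j \<in> l2"
  shows "T (\<lambda>i. \<Sum>j\<in>F. g j i) = (\<lambda>i. \<Sum>j\<in>F. T (g j) i)"
  using assms(2,3)
proof (induction F rule: finite_induct)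
  case empty
  then show ?case using bops_zero[OF assms(1)] by simp
next
  case (insert a F)
  have "T (\<lambda>i. \<Sum>j\<in>insert a F. g j i) = T (\<lambda>i. (\<Sum>j\<in>F. g j i) + g a i)"
    using insert.hyps by (simp add: add.commute)
  also have "\<dots> = (\<lambda>i. T (\<lambda>i. \<Sum>j\<in>F. g j i) i + T (g a) i)"
    using insert by (intro bops_add[OF assms(1)] l2_sum) auto
  finally show ?case
    using insert by (simp add: add.commute)
qed

lemma bops_funpow_l2: "T \<in> bops \<Longrightarrow> x \<in> l2 \<Longrightarrow> (T ^^ n) x \<in> l2"
  by (induction n) (auto intro: bops_l2)

lemma real_le_of_power2_le_mult:
  fixes a b :: real
  assumes "a\<^sup>2 \<le> a * b" "0 \<le> a" "0 \<le> b"
  shows "a \<le> b"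
  using assms by (cases "a = 0") (auto simp: power2_eq_square)

text \<open>For a self-adjoint idempotent, \<open>\<parallel>P x\<parallel>\<^sup>2 = \<langle>x, P x\<rangle>\<close>.\<close>

lemma projection_norm_le:
  assumes "P \<in> bops" "is_adjoint P P" "\<And>x. P (P x) = P x" "x \<in> l2"
  shows "l2_norm (P x) \<le> l2_norm x"
proof -
  have Px: "P x \<in> l2" by (rule bops_l2[OF assms(1,4)])
  have "l2_inner (P x) (P x) = l2_inner x (P x)"
    using assms(2,3) Px assms(4) unfolding is_adjoint_def by metis
  hence "(l2_norm (P x))\<^sup>2 = cmod (l2_inner x (P x))"
    by (simp add: l2_norm_power2_eq_inner[OF Px])
  also have "\<dots> \<le> l2_norm (P x) * l2_norm x"
    using l2_cauchy_schwarz[OF assms(4) Px] by (simp add: mult.commute)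
  finally show ?thesis by (rule real_le_of_power2_le_mult) (simp_all add: l2_norm_nonneg)
qed

section \<open>Existence of adjoints\<close>

definition unit_vec :: "'i \<Rightarrow> 'i \<Rightarrow> complex" where
  "unit_vec j = (\<lambda>i. if i = j then 1 else 0)"

definition truncate :: "'i set \<Rightarrow> ('i \<Rightarrow> complex) \<Rightarrow> 'i \<Rightarrow> complex" where
  "truncate F x = (\<lambda>i. if i \<in> F then x i else 0)"

lemma has_sum_truncate_norm_power2:
  "finite F \<Longrightarrow> ((\<lambda>i. (cmod (truncate F x i))\<^sup>2) has_sum (\<Sum>j\<in>F. (cmod (x j))\<^sup>2)) UNIV"
  by (rule has_sum_finite_neutralI[of F]) (auto simp: truncate_def)

lemma truncate_l2: "finite F \<Longrightarrow> truncate F x \<in> l2"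
  unfolding l2_def using has_sum_truncate_norm_power2 summable_on_def by blast

lemma l2_norm_truncate_power2: "finite F \<Longrightarrow> (l2_norm (truncate F x))\<^sup>2 = (\<Sum>j\<in>F. (cmod (x j))\<^sup>2)"
  unfolding l2_norm_power2 using has_sum_truncate_norm_power2 infsumI by blast

lemma unit_vec_l2: "unit_vec j \<in> l2"
proof -
  have "unit_vec j = truncate {j} (\<lambda>i. 1)" by (auto simp: unit_vec_def truncate_def)
  then show ?thesis using truncate_l2[of "{j}"] by simp
qed

lemma truncate_eq_sum_unit_vec:
  "finite F \<Longrightarrow> truncate F x = (\<lambda>i. \<Sum>j\<in>F. x j * unit_vec j i)"
  by (simp add: truncate_def unit_vec_def fun_eq_iff if_distrib[of "(*) _"] sum.delta' cong: if_cong)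

lemma bops_truncate:
  assumes "T \<in> bops" "finite F"
  shows "T (truncate F x) = (\<lambda>i. \<Sum>j\<in>F. x j * T (unit_vec j) i)"
proof -
  have "T (truncate F x) = (\<lambda>i. \<Sum>j\<in>F. T (\<lambda>i. x j * unit_vec j i) i)"
    unfolding truncate_eq_sum_unit_vec[OF assms(2)]
    by (rule bops_sum[OF assms]) (simp add: l2_scale unit_vec_l2)
  then show ?thesis by (simp add: bops_scale[OF assms(1) unit_vec_l2])
qed

lemma l2_inner_bops_truncate_left:
  assumes "T \<in> bops" "finite F" "y \<in> l2"
  shows "l2_inner (T (truncate F x)) y = (\<Sum>j\<in>F. cnj (x j) * l2_inner (T (unit_vec j)) y)"
  using assms
  by (simp add: bops_truncate l2_inner_sum_left l2_inner_scale_left l2_scale bops_l2 unit_vec_l2)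

text \<open>The adjoint is built coordinatewise: \<open>(T\<^sup>* y) j = \<langle>T e\<^sub>j, y\<rangle>\<close>.
  Testing \<open>T\<close> against truncations of this vector shows it is square summable.\<close>

lemma adjoint_coeffs_partial_bound:
  assumes T: "T \<in> bops" and K0: "K \<ge> 0" and K: "\<And>x. x \<in> l2 \<Longrightarrow> l2_norm (T x) \<le> K * l2_norm x"
    and y: "y \<in> l2" and F: "finite F"
  shows "(\<Sum>j\<in>F. (cmod (l2_inner (T (unit_vec j)) y))\<^sup>2) \<le> (K * l2_norm y)\<^sup>2"
proof -
  define c where "c j = l2_inner (T (unit_vec j)) y" for j
  define z where "z = truncate F c"
  have z: "z \<in> l2" unfolding z_def by (rule truncate_l2[OF F])
  have "l2_inner (T z) y = (\<Sum>j\<in>F. of_real ((cmod (c j))\<^sup>2))"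
    unfolding z_def l2_inner_bops_truncate_left[OF T F y] c_def
    by (intro sum.cong refl) (metis complex_norm_square mult.commute)
  also have "\<dots> = of_real ((l2_norm z)\<^sup>2)"
    unfolding z_def l2_norm_truncate_power2[OF F] by simp
  finally have "(l2_norm z)\<^sup>2 = cmod (l2_inner (T z) y)"
    by (metis norm_of_real abs_of_nonneg zero_le_power2)
  also have "\<dots> \<le> l2_norm (T z) * l2_norm y"
    by (rule l2_cauchy_schwarz[OF bops_l2[OF T z] y])
  also have "\<dots> \<le> l2_norm z * (K * l2_norm y)"
    using mult_right_mono[OF K[OF z] l2_norm_nonneg] by (simp add: algebra_simps)
  finally have "l2_norm z \<le> K * l2_norm y"
    by (rule real_le_of_power2_le_mult) (simp_all add: K0 l2_norm_nonneg)
  then have "(l2_norm z)\<^sup>2 \<le> (K * l2_norm y)\<^sup>2"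
    by (rule power_mono[OF _ l2_norm_nonneg])
  then show ?thesis
    unfolding z_def l2_norm_truncate_power2[OF F] c_def by simp
qed

lemma adjoint_coeffs_l2:
  assumes T: "T \<in> bops" and K0: "K \<ge> 0" and K: "\<And>x. x \<in> l2 \<Longrightarrow> l2_norm (T x) \<le> K * l2_norm x"
    and y: "y \<in> l2"
  shows "(\<lambda>j. l2_inner (T (unit_vec j)) y) \<in> l2"
    and "l2_norm (\<lambda>j. l2_inner (T (unit_vec j)) y) \<le> K * l2_norm y"
proof -
  let ?f = "\<lambda>j. (cmod (l2_inner (T (unit_vec j)) y))\<^sup>2"
  have partial: "sum ?f F \<le> (K * l2_norm y)\<^sup>2" if "finite F" for F
    by (rule adjoint_coeffs_partial_bound[OF T K0 K y that])
  have "?f summable_on UNIV"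
    using partial by (intro nonneg_bdd_above_summable_on bdd_aboveI) auto
  then show "(\<lambda>j. l2_inner (T (unit_vec j)) y) \<in> l2" by (simp add: l2_def)
  have "infsum ?f UNIV \<le> (K * l2_norm y)\<^sup>2"
    by (rule infsum_le_finite_sums[OF \<open>?f summable_on UNIV\<close>]) (use partial in auto)
  then have "l2_norm (\<lambda>j. l2_inner (T (unit_vec j)) y) \<le> sqrt ((K * l2_norm y)\<^sup>2)"
    unfolding l2_norm_def by (rule real_sqrt_le_mono)
  then show "l2_norm (\<lambda>j. l2_inner (T (unit_vec j)) y) \<le> K * l2_norm y"
    using K0 l2_norm_nonneg[of y] by simp
qed

lemma l2_norm_diff_truncate_tendsto:
  assumes x: "x \<in> l2"
  shows "((\<lambda>F. l2_norm (\<lambda>i. x i - truncate F x i)) \<longlongrightarrow> 0) (finite_subsets_at_top UNIV)"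
proof -
  let ?f = "\<lambda>i. (cmod (x i))\<^sup>2"
  have tail: "l2_norm (\<lambda>i. x i - truncate F x i) = sqrt (infsum ?f UNIV - sum ?f F)"
    if F: "finite F" for F
  proof -
    have "(\<Sum>\<^sub>\<infinity>i. (cmod (x i - truncate F x i))\<^sup>2) = infsum ?f (UNIV - F)"
      by (rule infsum_cong_neutral) (auto simp: truncate_def)
    also have "\<dots> = infsum ?f UNIV - sum ?f F"
      using infsum_Diff[OF l2_norm_power2_summable[OF x], of F] F by simp
    finally show ?thesis by (simp add: l2_norm_def)
  qed
  have "(sum ?f \<longlongrightarrow> infsum ?f UNIV) (finite_subsets_at_top UNIV)"
    by (rule infsum_tendsto[OF l2_norm_power2_summable[OF x]])
  then have "((\<lambda>F. sqrt (infsum ?f UNIV - sum ?f F)) \<longlongrightarrow> sqrt (infsum ?f UNIV - infsum ?f UNIV))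
               (finite_subsets_at_top UNIV)"
    by (intro tendsto_real_sqrt tendsto_diff tendsto_const)
  then have "((\<lambda>F. sqrt (infsum ?f UNIV - sum ?f F)) \<longlongrightarrow> 0) (finite_subsets_at_top UNIV)"
    by simp
  moreover have "\<forall>\<^sub>F F in finite_subsets_at_top UNIV.
      sqrt (infsum ?f UNIV - sum ?f F) = l2_norm (\<lambda>i. x i - truncate F x i)"
    by (rule eventually_finite_subsets_at_top_weakI) (simp add: tail)
  ultimately show ?thesis by (rule Lim_transform_eventually)
qed

lemma bops_inner_truncate_tendsto:
  assumes T: "T \<in> bops" and x: "x \<in> l2" and y: "y \<in> l2"
  shows "((\<lambda>F. l2_inner (T (truncate F x)) y) \<longlongrightarrow> l2_inner (T x) y) (finite_subsets_at_top UNIV)"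
proof -
  obtain K where K0: "K \<ge> 0" and K: "\<And>x. x \<in> l2 \<Longrightarrow> l2_norm (T x) \<le> K * l2_norm x"
    using bops_bounded[OF T] by blast
  have bound: "norm (l2_inner (T (truncate F x)) y - l2_inner (T x) y)
                 \<le> K * l2_norm y * l2_norm (\<lambda>i. x i - truncate F x i)" if F: "finite F" for F
  proof -
    let ?d = "\<lambda>i. x i - truncate F x i"
    have xF: "truncate F x \<in> l2" by (rule truncate_l2[OF F])
    have d: "?d \<in> l2" by (rule l2_diff[OF x xF])
    have "l2_inner (T x) y - l2_inner (T (truncate F x)) y = l2_inner (T ?d) y"
      by (simp add: bops_diff[OF T x xF] l2_inner_diff_left[OF y bops_l2[OF T x] bops_l2[OF T xF]])
    then have "norm (l2_inner (T (truncate F x)) y - l2_inner (T x) y) = cmod (l2_inner (T ?d) y)"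
      by (metis norm_minus_commute)
    also have "\<dots> \<le> l2_norm (T ?d) * l2_norm y"
      by (rule l2_cauchy_schwarz[OF bops_l2[OF T d] y])
    also have "\<dots> \<le> K * l2_norm ?d * l2_norm y"
      by (rule mult_right_mono[OF K[OF d] l2_norm_nonneg])
    finally show ?thesis by (simp add: algebra_simps)
  qed
  have "((\<lambda>F. K * l2_norm y * l2_norm (\<lambda>i. x i - truncate F x i)) \<longlongrightarrow> K * l2_norm y * 0)
          (finite_subsets_at_top UNIV)"
    by (rule tendsto_mult[OF tendsto_const l2_norm_diff_truncate_tendsto[OF x]])
  then have "((\<lambda>F. K * l2_norm y * l2_norm (\<lambda>i. x i - truncate F x i)) \<longlongrightarrow> 0)
               (finite_subsets_at_top UNIV)"
    by (simp only: mult_zero_right)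
  then have "((\<lambda>F. l2_inner (T (truncate F x)) y - l2_inner (T x) y) \<longlongrightarrow> 0) (finite_subsets_at_top UNIV)"
    by (intro Lim_null_comparison[OF eventually_finite_subsets_at_top_weakI[OF bound]])
  then show ?thesis by (simp add: LIM_zero_iff)
qed

lemma adjoint_exists:
  assumes T: "T \<in> bops"
  shows "\<exists>S. is_adjoint T S"
proof -
  obtain K where K0: "K \<ge> 0" and K: "\<And>x. x \<in> l2 \<Longrightarrow> l2_norm (T x) \<le> K * l2_norm x"
    using bops_bounded[OF T] by blast
  define S where "S y = (if y \<in> l2 then (\<lambda>j. l2_inner (T (unit_vec j)) y) else (\<lambda>i. 0))" for y
  have S_l2: "S y \<in> l2" and S_bound: "l2_norm (S y) \<le> K * l2_norm y" if "y \<in> l2" for y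
    using adjoint_coeffs_l2[OF T K0 K that] that by (simp_all add: S_def)
  have S_lincomb: "S (\<lambda>i. y i + a * z i) = (\<lambda>i. S y i + a * S z i)" if "y \<in> l2" "z \<in> l2" for y z a
    using that l2_lincomb[OF that]
    by (simp add: S_def l2_inner_lincomb_right[OF bops_l2[OF T unit_vec_l2]])
  have "S \<in> bops"
    unfolding bops_def using S_l2 S_lincomb S_bound by (auto simp: S_def intro!: exI[of _ K])
  moreover have "l2_inner (T x) y = l2_inner x (S y)" if x: "x \<in> l2" and y: "y \<in> l2" for x y
  proof -
    let ?g = "\<lambda>j. cnj (x j) * S y j"
    have "(sum ?g \<longlongrightarrow> l2_inner x (S y)) (finite_subsets_at_top UNIV)"
      unfolding l2_inner_def by (rule infsum_tendsto[OF l2_inner_summable[OF x S_l2[OF y]]])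
    moreover have "\<forall>\<^sub>F F in finite_subsets_at_top UNIV. sum ?g F = l2_inner (T (truncate F x)) y"
      by (rule eventually_finite_subsets_at_top_weakI)
        (simp add: l2_inner_bops_truncate_left[OF T _ y] S_def y)
    ultimately have "((\<lambda>F. l2_inner (T (truncate F x)) y) \<longlongrightarrow> l2_inner x (S y))
                       (finite_subsets_at_top UNIV)"
      by (rule Lim_transform_eventually)
    then show ?thesis
      by (rule tendsto_unique[OF finite_subsets_at_top_neq_bot bops_inner_truncate_tendsto[OF T x y]])
  qed
  ultimately show ?thesis unfolding is_adjoint_def by blast
qed

lemma is_adjoint_adj: "T \<in> bops \<Longrightarrow> is_adjoint T (adj T)"
  unfolding adj_def using adjoint_exists by (rule someI_ex)

section \<open>Isometries and wandering vectors\<close>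

locale l2_isometry =
  fixes V W :: "('i \<Rightarrow> complex) \<Rightarrow> 'i \<Rightarrow> complex"
  assumes V_bops: "V \<in> bops" and W_bops: "W \<in> bops"
    and adjoint: "\<And>x y. x \<in> l2 \<Longrightarrow> y \<in> l2 \<Longrightarrow> l2_inner (V x) y = l2_inner x (W y)"
    and W_V: "\<And>x. x \<in> l2 \<Longrightarrow> W (V x) = x"
begin

lemma V_l2: "x \<in> l2 \<Longrightarrow> V x \<in> l2"
  and W_l2: "x \<in> l2 \<Longrightarrow> W x \<in> l2"
  and V_pow_l2: "x \<in> l2 \<Longrightarrow> (V ^^ n) x \<in> l2"
  by (simp_all add: bops_l2 bops_funpow_l2 V_bops W_bops)

lemma l2_norm_V: "x \<in> l2 \<Longrightarrow> l2_norm (V x) = l2_norm x"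
  using l2_norm_power2_eq_inner[OF V_l2] l2_norm_power2_eq_inner[of x] adjoint[OF _ V_l2] W_V
  by (metis l2_norm_nonneg power2_eq_iff_nonneg)

lemma l2_norm_V_pow: "x \<in> l2 \<Longrightarrow> l2_norm ((V ^^ n) x) = l2_norm x"
  by (induction n) (simp_all add: l2_norm_V V_pow_l2)

lemma l2_norm_W_le: "y \<in> l2 \<Longrightarrow> l2_norm (W y) \<le> l2_norm y"
proof -
  assume y: "y \<in> l2"
  have "(l2_norm (W y))\<^sup>2 = cmod (l2_inner (V (W y)) y)"
    using l2_norm_power2_eq_inner[OF W_l2[OF y]] adjoint[OF W_l2[OF y] y] by simp
  also have "\<dots> \<le> l2_norm (W y) * l2_norm y"
    using l2_cauchy_schwarz[OF V_l2[OF W_l2[OF y]] y] l2_norm_V[OF W_l2[OF y]] by simp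
  finally show ?thesis by (rule real_le_of_power2_le_mult) (simp_all add: l2_norm_nonneg)
qed

lemma inner_V_pow_left:
  "a \<in> l2 \<Longrightarrow> b \<in> l2 \<Longrightarrow> l2_inner ((V ^^ m) a) b = l2_inner a ((W ^^ m) b)"
proof (induction m arbitrary: b)
  case (Suc m)
  have "l2_inner ((V ^^ Suc m) a) b = l2_inner ((V ^^ m) a) (W b)"
    using adjoint[OF V_pow_l2 Suc.prems(2)] Suc.prems(1) by simp
  also have "\<dots> = l2_inner a ((W ^^ m) (W b))"
    by (rule Suc.IH[OF Suc.prems(1) W_l2[OF Suc.prems(2)]])
  finally show ?case by (simp only: funpow_Suc_right comp_apply)
qed simp

lemma W_pow_V_pow: "a \<in> l2 \<Longrightarrow> m \<le> k \<Longrightarrow> (W ^^ m) ((V ^^ k) a) = (V ^^ (k - m)) a"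
proof (induction m arbitrary: k)
  case (Suc m)
  then obtain k' where k: "k = Suc k'" by (cases k) auto
  have "(W ^^ Suc m) ((V ^^ k) a) = (W ^^ m) (W ((V ^^ k) a))"
    by (simp only: funpow_Suc_right comp_apply)
  also have "\<dots> = (W ^^ m) (W (V ((V ^^ k') a)))"
    by (simp add: k)
  also have "\<dots> = (V ^^ (k' - m)) a"
    using Suc by (simp add: W_V V_pow_l2 k)
  finally show ?case by (simp add: k)
qed simp

text \<open>The witness is \<open>u - V W u\<close> for any \<open>u\<close> with \<open>V W u \<noteq> u\<close>.\<close>

lemma exists_wandering_vector:
  assumes "V \<circ> W \<noteq> bid"
  obtains \<xi> where "\<xi> \<in> l2" "W \<xi> = (\<lambda>i. 0)" "\<xi> \<noteq> (\<lambda>i. 0)"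
proof -
  obtain u where u: "V (W u) \<noteq> bid u" using assms by (auto simp: fun_eq_iff)
  have "u \<in> l2"
    using u bops_outside_l2[OF W_bops] bops_zero[OF V_bops] by (auto simp: bid_def)
  define \<xi> where "\<xi> = (\<lambda>i. u i - V (W u) i)"
  show thesis
  proof (rule that)
    show "\<xi> \<in> l2" unfolding \<xi>_def by (rule l2_diff[OF \<open>u \<in> l2\<close> V_l2[OF W_l2]]) fact
    show "W \<xi> = (\<lambda>i. 0)"
      unfolding \<xi>_def by (simp add: bops_diff[OF W_bops] V_l2 W_l2 W_V \<open>u \<in> l2\<close>)
    show "\<xi> \<noteq> (\<lambda>i. 0)"
      using u \<open>u \<in> l2\<close> by (force simp: \<xi>_def bid_def fun_eq_iff)
  qed
qed

end

locale wandering_vector = l2_isometry +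
  fixes \<xi> :: "'i \<Rightarrow> complex"
  assumes \<xi>_l2: "\<xi> \<in> l2" and W_\<xi>: "W \<xi> = (\<lambda>i. 0)" and \<xi>_nonzero: "\<xi> \<noteq> (\<lambda>i. 0)"
begin

lemma l2_norm_\<xi>_pos: "l2_norm \<xi> > 0"
  using l2_norm_nonneg[of \<xi>] l2_norm_eq_0D[OF \<xi>_l2] \<xi>_nonzero by force

lemma inner_\<xi>_V: "a \<in> l2 \<Longrightarrow> l2_inner \<xi> (V a) = 0"
  using adjoint[OF _ \<xi>_l2, of a] W_\<xi> l2_inner_commute[of \<xi> "V a"] by simp

lemma inner_V_pow_\<xi>_le:
  assumes "m \<le> k"
  shows "l2_inner ((V ^^ m) \<xi>) ((V ^^ k) \<xi>) = (if m = k then of_real ((l2_norm \<xi>)\<^sup>2) else 0)"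
proof -
  have "l2_inner ((V ^^ m) \<xi>) ((V ^^ k) \<xi>) = l2_inner \<xi> ((V ^^ (k - m)) \<xi>)"
    by (simp add: inner_V_pow_left \<xi>_l2 V_pow_l2 W_pow_V_pow assms)
  also have "\<dots> = (if m = k then of_real ((l2_norm \<xi>)\<^sup>2) else 0)"
  proof (cases "m = k")
    case False
    then obtain d where "k - m = Suc d" using assms gr0_implies_Suc[of "k - m"] by auto
    then show ?thesis using False inner_\<xi>_V[OF V_pow_l2[OF \<xi>_l2, of d]] by simp
  qed (simp add: l2_inner_self \<xi>_l2)
  finally show ?thesis .
qed

lemma inner_V_pow_\<xi>:
  "l2_inner ((V ^^ m) \<xi>) ((V ^^ k) \<xi>) = (if m = k then of_real ((l2_norm \<xi>)\<^sup>2) else 0)"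
proof (cases "m \<le> k")
  case False
  then show ?thesis
    using inner_V_pow_\<xi>_le[of k m] l2_inner_commute[of "(V ^^ m) \<xi>" "(V ^^ k) \<xi>"] by simp
qed (rule inner_V_pow_\<xi>_le)

definition orbit_sum :: "nat \<Rightarrow> 'i \<Rightarrow> complex" where
  "orbit_sum N = (\<lambda>i. \<Sum>m<N. (V ^^ m) \<xi> i)"

lemma orbit_sum_l2: "orbit_sum N \<in> l2"
  unfolding orbit_sum_def by (rule l2_sum) (simp_all add: V_pow_l2 \<xi>_l2)

lemma inner_orbit_sum_left:
  "y \<in> l2 \<Longrightarrow> l2_inner (orbit_sum N) y = (\<Sum>m<N. l2_inner \<xi> ((W ^^ m) y))"
  unfolding orbit_sum_def
  by (simp add: l2_inner_sum_left V_pow_l2 \<xi>_l2 inner_V_pow_left)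

lemma l2_norm_orbit_sum_power2: "(l2_norm (orbit_sum N))\<^sup>2 = real N * (l2_norm \<xi>)\<^sup>2"
proof -
  have "l2_inner (orbit_sum N) (orbit_sum N) = (\<Sum>m<N. \<Sum>k<N. l2_inner ((V ^^ m) \<xi>) ((V ^^ k) \<xi>))"
    unfolding orbit_sum_def
    by (simp add: l2_inner_sum_left l2_inner_sum_right l2_sum V_pow_l2 \<xi>_l2)
  also have "\<dots> = of_real (real N * (l2_norm \<xi>)\<^sup>2)"
    by (simp add: inner_V_pow_\<xi>)
  finally show ?thesis
    using l2_inner_self[OF orbit_sum_l2] by (metis of_real_eq_iff)
qed

lemma l2_norm_V_orbit_sum_diff: "l2_norm (\<lambda>i. V (orbit_sum N) i - orbit_sum N i) \<le> 2 * l2_norm \<xi>"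
proof -
  have "V (orbit_sum N) = (\<lambda>i. \<Sum>m<N. (V ^^ Suc m) \<xi> i)"
    unfolding orbit_sum_def by (simp add: bops_sum[OF V_bops] V_pow_l2 \<xi>_l2)
  then have "(\<lambda>i. V (orbit_sum N) i - orbit_sum N i) = (\<lambda>i. \<Sum>m<N. (V ^^ Suc m) \<xi> i - (V ^^ m) \<xi> i)"
    by (simp only: orbit_sum_def sum_subtractf)
  also have "\<dots> = (\<lambda>i. (V ^^ N) \<xi> i + (-1) * \<xi> i)"
    by (rule ext, subst sum_lessThan_telescope) simp
  finally show ?thesis
    using l2_norm_triangle[OF V_pow_l2[OF \<xi>_l2] \<xi>_l2, of N "-1"] by (simp add: l2_norm_V_pow \<xi>_l2)
qed

end

section \<open>Clean decompositions of an isometry\<close>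

context wandering_vector
begin

lemma double_neq_invertible_plus_projection:
  assumes U: "U \<in> bops" and U': "U' \<in> bops" and U_U': "\<And>x. x \<in> l2 \<Longrightarrow> U (U' x) = x"
    and P: "P \<in> bops" "is_adjoint P P" "\<And>x. P (P x) = P x"
    and split: "\<And>x. x \<in> l2 \<Longrightarrow> (\<lambda>i. 2 * V x i) = (\<lambda>i. U x i + P x i)"
  shows False
proof -
  define x where "x = U' \<xi>"
  have x: "x \<in> l2" unfolding x_def by (rule bops_l2[OF U' \<xi>_l2])
  have Px: "P x \<in> l2" by (rule bops_l2[OF P(1) x])
  have "\<xi> = (\<lambda>i. 2 * V x i - P x i)"
    using split[OF x] U_U'[OF \<xi>_l2] by (simp add: x_def fun_eq_iff algebra_simps)
  then have "(\<lambda>i. 0) = (\<lambda>i. 2 * x i - W (P x) i)"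
    using W_\<xi> by (simp add: bops_diff[OF W_bops] bops_scale[OF W_bops] l2_scale V_l2 x Px W_V)
  then have "W (P x) = (\<lambda>i. 2 * x i)"
    by (simp add: fun_eq_iff)
  then have "2 * l2_norm x \<le> l2_norm (P x)"
    using l2_norm_W_le[OF Px] l2_norm_scale[OF x, of 2] by simp
  also have "\<dots> \<le> l2_norm x"
    by (rule projection_norm_le[OF P x])
  finally have "x = (\<lambda>i. 0)"
    using l2_norm_eq_0D[OF x] l2_norm_nonneg[of x] by simp
  then show False
    using U_U'[OF \<xi>_l2] bops_zero[OF U] \<xi>_nonzero by (simp add: x_def)
qed

end

locale commuting_split = l2_isometry +
  fixes U U' e :: "('i \<Rightarrow> complex) \<Rightarrow> 'i \<Rightarrow> complex"
  assumes U_bops: "U \<in> bops" and U'_bops: "U' \<in> bops" and e_bops: "e \<in> bops"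
    and U_U': "\<And>x. x \<in> l2 \<Longrightarrow> U (U' x) = x" and U'_U: "\<And>x. x \<in> l2 \<Longrightarrow> U' (U x) = x"
    and e_idem: "\<And>x. e (e x) = e x" and e_V: "\<And>x. e (V x) = V (e x)"
    and V_split: "\<And>x. x \<in> l2 \<Longrightarrow> V x = (\<lambda>i. U x i + e x i)"
begin

lemma e_l2: "x \<in> l2 \<Longrightarrow> e x \<in> l2"
  and U'_l2: "x \<in> l2 \<Longrightarrow> U' x \<in> l2"
  by (simp_all add: bops_l2 e_bops U'_bops)

lemma U_eq: "x \<in> l2 \<Longrightarrow> U x = (\<lambda>i. V x i - e x i)"
  using V_split by (simp add: fun_eq_iff)

lemma e_U: "x \<in> l2 \<Longrightarrow> e (U x) = U (e x)"
  by (simp add: U_eq e_l2 V_l2 bops_diff[OF e_bops] e_V e_idem)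

lemma e_U': "x \<in> l2 \<Longrightarrow> e (U' x) = U' (e x)"
  by (metis U'_l2 U'_U U_U' e_U e_l2)

lemma e_complement: "x \<in> l2 \<Longrightarrow> e (\<lambda>i. x i - e x i) = (\<lambda>i. 0)"
  by (simp add: bops_diff[OF e_bops] e_l2 e_idem)

text \<open>On the range of \<open>1 - e\<close> the isometry \<open>V\<close> agrees with the invertible \<open>U\<close>, so that
  range lies in the range of \<open>V\<close> and \<open>W\<close> maps it into itself.\<close>

lemma V_U'_complement:
  assumes "x \<in> l2"
  shows "V (U' (\<lambda>i. x i - e x i)) = (\<lambda>i. x i - e x i)"
    and "e (U' (\<lambda>i. x i - e x i)) = (\<lambda>i. 0)"
proof -
  have d: "(\<lambda>i. x i - e x i) \<in> l2" by (rule l2_diff[OF assms e_l2[OF assms]])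
  show e0: "e (U' (\<lambda>i. x i - e x i)) = (\<lambda>i. 0)"
    using e_U'[OF d] e_complement[OF assms] bops_zero[OF U'_bops] by simp
  show "V (U' (\<lambda>i. x i - e x i)) = (\<lambda>i. x i - e x i)"
    using V_split[OF U'_l2[OF d]] e0 U_U'[OF d] by simp
qed

lemma complement_in_range_V: "x \<in> l2 \<Longrightarrow> \<exists>g\<in>l2. (\<lambda>i. x i - e x i) = V g"
  using V_U'_complement(1) U'_l2 l2_diff e_l2 by metis

lemma W_pow_complement: "x \<in> l2 \<Longrightarrow> \<exists>y\<in>l2. (W ^^ n) (\<lambda>i. x i - e x i) = (\<lambda>i. y i - e y i)"
proof (induction n arbitrary: x)
  case (Suc n)
  define g where "g = U' (\<lambda>i. x i - e x i)"
  have g: "g \<in> l2" unfolding g_def by (rule U'_l2[OF l2_diff[OF Suc.prems e_l2[OF Suc.prems]]])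
  have "W (\<lambda>i. x i - e x i) = (\<lambda>i. g i - e g i)"
    using W_V[OF g] V_U'_complement[OF Suc.prems] by (simp add: g_def)
  then show ?case
    using Suc.IH[OF g] by (simp only: funpow_Suc_right comp_apply)
qed auto

lemma e_bounded_by_V_diff:
  obtains C where "C \<ge> 0" "\<And>w. w \<in> l2 \<Longrightarrow> l2_norm (e w) \<le> C * l2_norm (\<lambda>i. V w i - w i)"
proof -
  obtain K1 where K10: "K1 \<ge> 0" and K1: "\<And>x. x \<in> l2 \<Longrightarrow> l2_norm (U' x) \<le> K1 * l2_norm x"
    using bops_bounded[OF U'_bops] by blast
  obtain K2 where K20: "K2 \<ge> 0" and K2: "\<And>x. x \<in> l2 \<Longrightarrow> l2_norm (e x) \<le> K2 * l2_norm x"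
    using bops_bounded[OF e_bops] by blast
  have "l2_norm (e w) \<le> K1 * K2 * l2_norm (\<lambda>i. V w i - w i)" if w: "w \<in> l2" for w
  proof -
    have d: "(\<lambda>i. V w i - w i) \<in> l2" by (rule l2_diff[OF V_l2[OF w] w])
    have "e (\<lambda>i. V w i - w i) = U (e w)"
      by (simp add: bops_diff[OF e_bops] V_l2 w e_V e_idem U_eq e_l2)
    then have "l2_norm (e w) = l2_norm (U' (e (\<lambda>i. V w i - w i)))"
      by (simp add: U'_U e_l2 w)
    also have "\<dots> \<le> K1 * l2_norm (e (\<lambda>i. V w i - w i))"
      by (rule K1[OF e_l2[OF d]])
    also have "\<dots> \<le> K1 * (K2 * l2_norm (\<lambda>i. V w i - w i))"
      by (rule mult_left_mono[OF K2[OF d] K10])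
    finally show ?thesis by (simp add: mult.assoc)
  qed
  then show ?thesis using that[of "K1 * K2"] K10 K20 by simp
qed

end

context wandering_vector
begin

lemma l2_norm_orbit_sum_unbounded: "\<exists>N. l2_norm (orbit_sum N) > B"
proof -
  obtain N :: nat where N: "real N > B\<^sup>2 / (l2_norm \<xi>)\<^sup>2"
    using reals_Archimedean2 by blast
  then have "(l2_norm (orbit_sum N))\<^sup>2 > B\<^sup>2"
    using l2_norm_\<xi>_pos by (simp add: l2_norm_orbit_sum_power2 field_simps)
  then show ?thesis
    using power_mono[of "l2_norm (orbit_sum N)" B 2] l2_norm_nonneg[of "orbit_sum N"]
    by (metis not_le)
qed

lemma l2_norm_orbit_sum_bounded_if_commuting_split:
  assumes "commuting_split V W U U' e"
  obtains B where "\<And>N. l2_norm (orbit_sum N) \<le> B"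
proof -
  interpret commuting_split V W U U' e by fact
  obtain C where C0: "C \<ge> 0" and C: "\<And>w. w \<in> l2 \<Longrightarrow> l2_norm (e w) \<le> C * l2_norm (\<lambda>i. V w i - w i)"
    using e_bounded_by_V_diff by blast
  have "l2_norm (orbit_sum N) \<le> C * (2 * l2_norm \<xi>)" for N
  proof -
    let ?X = "orbit_sum N"
    have X: "?X \<in> l2" by (rule orbit_sum_l2)
    have "l2_inner \<xi> ((W ^^ m) (\<lambda>i. ?X i - e ?X i)) = 0" for m
      using W_pow_complement[OF X, of m] complement_in_range_V inner_\<xi>_V by metis
    then have "l2_inner ?X (\<lambda>i. ?X i - e ?X i) = 0"
      by (simp add: inner_orbit_sum_left l2_diff e_l2 X)
    then have "l2_inner ?X ?X = l2_inner ?X (e ?X)"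
      by (simp add: l2_inner_diff_right[OF X X e_l2[OF X]])
    then have "(l2_norm ?X)\<^sup>2 = cmod (l2_inner ?X (e ?X))"
      by (simp add: l2_norm_power2_eq_inner[OF X])
    also have "\<dots> \<le> l2_norm ?X * l2_norm (e ?X)"
      by (rule l2_cauchy_schwarz[OF X e_l2[OF X]])
    also have "\<dots> \<le> l2_norm ?X * (C * (2 * l2_norm \<xi>))"
      using C[OF X] mult_left_mono[OF l2_norm_V_orbit_sum_diff C0]
      by (intro mult_left_mono[OF _ l2_norm_nonneg]) (rule order_trans)
    finally show ?thesis
      by (rule real_le_of_power2_le_mult) (simp_all add: C0 l2_norm_nonneg)
  qed
  then show ?thesis by (rule that)
qed

lemma no_commuting_split: "\<not> commuting_split V W U U' e"
  using l2_norm_orbit_sum_bounded_if_commuting_split l2_norm_orbit_sum_unbounded not_le by metis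

end

section \<open>Von Neumann algebras\<close>

lemma comp_eq_bidD: "S \<circ> T = bid \<Longrightarrow> x \<in> l2 \<Longrightarrow> S (T x) = x"
  by (metis bid_def comp_apply)

lemma invertible_in_bops:
  assumes "M \<subseteq> bops" "invertible_in M U"
  shows "U \<in> bops \<and> (\<exists>U'\<in>bops. (\<forall>x\<in>l2. U (U' x) = x) \<and> (\<forall>x\<in>l2. U' (U x) = x))"
  using assms comp_eq_bidD unfolding invertible_in_def by blast

lemma l2_isometry_adj:
  assumes "V \<in> bops" "adj V \<circ> V = bid"
  shows "l2_isometry V (adj V)"
  using is_adjoint_adj[OF assms(1)] comp_eq_bidD[OF assms(2)]
  by unfold_locales (auto simp: is_adjoint_def assms(1))

lemma properly_infinite_wandering_vector:
  assumes "von_neumann_algebra M" "properly_infinite M"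
  obtains V \<xi> where "V \<in> M" "wandering_vector V (adj V) \<xi>"
proof -
  obtain Q V where Q: "Q \<noteq> bid" and V: "V \<in> M" "adj V \<circ> V = bid" "V \<circ> adj V = Q"
    using assms(2) unfolding properly_infinite_def infinite_proj_def mvn_equiv_def by blast
  have "V \<in> bops" using assms(1) V(1) unfolding von_neumann_algebra_def by blast
  then interpret l2_isometry V "adj V" using l2_isometry_adj V(2) by blast
  obtain \<xi> where "\<xi> \<in> l2" "adj V \<xi> = (\<lambda>i. 0)" "\<xi> \<noteq> (\<lambda>i. 0)"
    using exists_wandering_vector Q V(3) by blast
  then have "wandering_vector V (adj V) \<xi>"
    by unfold_locales
  with V(1) show thesis by (rule that)
qed

lemma not_star_clean_if_wandering_vector:
  assumes M: "von_neumann_algebra M" and "V \<in> M" and \<xi>: "wandering_vector V (adj V) \<xi>"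
  shows "\<not> star_clean M"
proof
  assume "star_clean M"
  moreover have "bscale 2 V \<in> M"
    using M \<open>V \<in> M\<close> unfolding von_neumann_algebra_def by blast
  ultimately obtain U P where U: "invertible_in M U" and P: "is_proj M P" and split: "bscale 2 V = badd U P"
    unfolding star_clean_def by blast
  have M_bops: "M \<subseteq> bops" using M unfolding von_neumann_algebra_def by blast
  obtain U' where "U \<in> bops" "U' \<in> bops" "\<And>x. x \<in> l2 \<Longrightarrow> U (U' x) = x"
    using invertible_in_bops[OF M_bops U] by blast
  moreover have "P \<in> bops"
    using P M_bops unfolding is_proj_def by blast
  moreover have "is_adjoint P P"
    using is_adjoint_adj[OF \<open>P \<in> bops\<close>] P unfolding is_proj_def by simp
  moreover have "\<And>x. P (P x) = P x"
    using P unfolding is_proj_def by (metis comp_apply)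
  moreover have "\<And>x. (\<lambda>i. 2 * V x i) = (\<lambda>i. U x i + P x i)"
    using split unfolding bscale_def badd_def by (simp add: fun_eq_iff)
  ultimately show False
    by (rule wandering_vector.double_neq_invertible_plus_projection[OF \<xi>])
qed

lemma not_strongly_clean_if_wandering_vector:
  assumes M: "von_neumann_algebra M" and "V \<in> M" and \<xi>: "wandering_vector V (adj V) \<xi>"
  shows "\<not> strongly_clean M"
proof
  assume "strongly_clean M"
  then obtain U e where U: "invertible_in M U" and "e \<in> M" "e \<circ> e = e" "e \<circ> V = V \<circ> e"
    and split: "V = badd U e"
    unfolding strongly_clean_def using \<open>V \<in> M\<close> by blast
  have M_bops: "M \<subseteq> bops" using M unfolding von_neumann_algebra_def by blast
  obtain U' where "U \<in> bops" "U' \<in> bops"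
    "\<And>x. x \<in> l2 \<Longrightarrow> U (U' x) = x" "\<And>x. x \<in> l2 \<Longrightarrow> U' (U x) = x"
    using invertible_in_bops[OF M_bops U] by blast
  moreover have "e \<in> bops" using \<open>e \<in> M\<close> M_bops by blast
  moreover have "\<And>x. e (e x) = e x" "\<And>x. e (V x) = V (e x)"
    using \<open>e \<circ> e = e\<close> \<open>e \<circ> V = V \<circ> e\<close> by (metis comp_apply)+
  moreover have "\<And>x. V x = (\<lambda>i. U x i + e x i)"
    using split unfolding badd_def by meson
  ultimately have "commuting_split V (adj V) U U' e"
    using wandering_vector.axioms(1)[OF \<xi>] by (simp add: commuting_split_def commuting_split_axioms_def)
  then show False
    using wandering_vector.no_commuting_split[OF \<xi>] by blast
qed

theorem lemma2p1:
  fixes M :: "(('i \<Rightarrow> complex) \<Rightarrow> ('i \<Rightarrow> complex)) set"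
  assumes "von_neumann_algebra M"
    and "properly_infinite M"
  shows "\<not> star_clean M \<and> \<not> strongly_clean M"
proof -
  obtain V \<xi> where "V \<in> M" "wandering_vector V (adj V) \<xi>"
    using properly_infinite_wandering_vector[OF assms] .
  then show ?thesis
    using not_star_clean_if_wandering_vector not_strongly_clean_if_wandering_vector assms(1) by blast
qed

end
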